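(* Let $A\in\mathrm{SL}(2,\mathbb R)$ and $\alpha\in\mathbb R$. Then either $\alpha$ is the slope of a vector of $A\Lambda_q$ (i.e. $\alpha=a/q$ for some $(q,a)^T\in A\Lambda_q$ with $q\ne0$), or there exist infinitely many $(q,a)^T\in A\Lambda_q$ with $q>0$ such that $$\left|\alpha-\frac aq\right|\le\frac1{2q^2}.$$
   Context: Fix an integer $q\ge3$ (used only as the index of the group; coordinates of vectors are written $(q,a)^T$ by abuse of notation), let $\lambda_q=2\cos(\pi/q)$, and let $G_q\subset \mathrm{SL}(2,\mathbb R)$ be the Hecke triangle group generated by $S=\begin{pmatrix}0&-1\\1&0\end{pmatrix}$ and $T_q=\begin{pmatrix}1&\lambda_q\\0&1\end{pmatrix}$, acting linearly on $\mathbb R^2$; $\Lambda_q=G_q(1,0)^T$, $A\Lambda_q=\{A\mathbf v:\mathbf v\in\Lambda_q\}$. *)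

theory Defs
  imports "HOL-Analysis.Analysis"
begin

(* 2x2 real matrices as real^2^2; vectors (x,y)^T as real^2 with x = v$1, y = v$2. *)

definition mat2 :: "real \<Rightarrow> real \<Rightarrow> real \<Rightarrow> real \<Rightarrow> real^2^2" where
  "mat2 a b c d = vector [vector [a, b], vector [c, d]]"

definition vec2 :: "real \<Rightarrow> real \<Rightarrow> real^2" where
  "vec2 x y = vector [x, y]"

definition SL2 :: "(real^2^2) set" where
  "SL2 = {A. det A = 1}"

definition lambda_hecke :: "nat \<Rightarrow> real" where
  "lambda_hecke m = 2 * cos (pi / real m)"

definition S_mat :: "real^2^2" where
  "S_mat = mat2 0 (-1) 1 0"

definition T_mat :: "nat \<Rightarrow> real^2^2" where
  "T_mat m = mat2 1 (lambda_hecke m) 0 1"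

inductive_set hecke_group :: "nat \<Rightarrow> (real^2^2) set" for m :: nat where
  id: "mat 1 \<in> hecke_group m"
| mulS: "g \<in> hecke_group m \<Longrightarrow> g ** S_mat \<in> hecke_group m"
| mulSinv: "g \<in> hecke_group m \<Longrightarrow> g ** matrix_inv S_mat \<in> hecke_group m"
| mulT: "g \<in> hecke_group m \<Longrightarrow> g ** T_mat m \<in> hecke_group m"
| mulTinv: "g \<in> hecke_group m \<Longrightarrow> g ** matrix_inv (T_mat m) \<in> hecke_group m"

definition Lambda_hecke :: "nat \<Rightarrow> (real^2) set" where
  "Lambda_hecke m = {g *v vec2 1 0 | g. g \<in> hecke_group m}"

definition transl_set :: "real^2^2 \<Rightarrow> (real^2) set \<Rightarrow> (real^2) set" where
  "transl_set A L = {A *v v | v. v \<in> L}"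

end

theory Submission
  imports Defs
begin

text \<open>Write a vector \<open>(x, y)\<close> of \<open>A \<Lambda>\<^sub>q\<close> as \<open>(x, z)\<close> with \<open>z = y - \<alpha> x\<close>, so that
  \<open>|\<alpha> - y/x| = |z| / |x|\<close>; an approximation of the required quality is a vector with \<open>x > 0\<close>
  and \<open>|x z| \<le> 1/2\<close>. Work with the unimodular bases \<open>(A g e\<^sub>1, A g e\<^sub>2)\<close>, \<open>g \<in> G\<^sub>q\<close>.
  If \<open>\<alpha>\<close> is not a slope, no \<open>z\<close> vanishes, and a rotate-and-round step (\<open>S\<close> followed by a
  power of \<open>T\<^sub>q\<close>) multiplies the \<open>z\<close> of the first basis vector by at most \<open>\<lambda>\<^sub>q/2 < 1\<close>.
  Near every basis there is such a vector whose \<open>z\<close> is at most a constant multiple larger: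
  if \<open>|x z| > 1/2\<close>, further rounding steps divide \<open>|x z|\<close> by at least \<open>4/\<lambda>\<^sub>q\<^sup>2\<close> while
  \<open>|z| exp (-\<kappa>/|x z|)\<close> does not increase; if \<open>x = 0\<close>, the products \<open>x z\<close> along the orbit
  of the elliptic element \<open>S T\<^sub>q\<close> change sign, and of two consecutive vectors of a unimodular
  basis with products of opposite signs one has \<open>|x z| \<le> 1/2\<close>. Such vectors with arbitrarily
  small nonzero \<open>|z|\<close> cannot form a finite set.\<close>

lemma vec2_nth [simp]: "vec2 x y $ 1 = x" "vec2 x y $ 2 = y"
  by (simp_all add: vec2_def)

lemma mat2_nth [simp]:
  "mat2 a b c d $ 1 $ 1 = a" "mat2 a b c d $ 1 $ 2 = b"
  "mat2 a b c d $ 2 $ 1 = c" "mat2 a b c d $ 2 $ 2 = d"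
  by (simp_all add: mat2_def)

lemma matrix_matrix_mult_2_nth:
  fixes M N :: "real^2^2"
  shows "(M ** N) $ i $ j = M $ i $ 1 * N $ 1 $ j + M $ i $ 2 * N $ 2 $ j"
  by (simp add: matrix_matrix_mult_def sum_2)

lemma matrix_vector_mult_2_nth:
  fixes M :: "real^2^2"
  shows "(M *v v) $ i = M $ i $ 1 * v $ 1 + M $ i $ 2 * v $ 2"
  by (simp add: matrix_vector_mult_def sum_2)

lemma det_mat2: "det (mat2 a b c d) = a * d - b * c"
  by (simp add: det_2)

lemma matrix_inv_unique:
  fixes A B :: "real^2^2"
  assumes "A ** B = mat 1" "B ** A = mat 1"
  shows "matrix_inv A = B"
proof -
  let ?P = "\<lambda>A'. A ** A' = mat 1 \<and> A' ** A = mat 1"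
  have inv: "?P (matrix_inv A)"
    unfolding matrix_inv_def by (rule someI[of ?P B]) (use assms in auto)
  have "matrix_inv A = matrix_inv A ** (A ** B)"
    by (simp add: assms(1))
  also have "\<dots> = B"
    using inv by (simp add: matrix_mul_assoc)
  finally show ?thesis .
qed

lemma matrix_inv_mat2:
  assumes "a * d - b * c = 1"
  shows "matrix_inv (mat2 a b c d) = mat2 d (- b) (- c) a"
  using assms
  by (intro matrix_inv_unique)
     (auto simp: vec_eq_iff forall_2 mat_def matrix_matrix_mult_2_nth algebra_simps)

lemma hecke_group_det: "g \<in> hecke_group m \<Longrightarrow> det g = 1"
  by (induction rule: hecke_group.induct)
     (simp_all add: det_mul S_mat_def T_mat_def matrix_inv_mat2 det_mat2)


lemma lambda_hecke_bounds:
  assumes "3 \<le> q"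
  shows "1 \<le> lambda_hecke q" "lambda_hecke q < 2"
proof -
  have q: "0 < pi / real q" "pi / real q \<le> pi / 3"
    using assms by (simp, intro divide_left_mono) auto
  have "cos (pi / 3) \<le> cos (pi / real q)"
    using q by (intro cos_monotone_0_pi_le) auto
  moreover have "cos (pi / real q) < cos 0"
    using q pi_gt_zero by (intro cos_monotone_0_pi) linarith+
  ultimately show "1 \<le> lambda_hecke q" "lambda_hecke q < 2"
    by (simp_all add: lambda_hecke_def cos_60)
qed

text \<open>\<open>cheb_U \<theta> k = U\<^sub>k\<^sub>-\<^sub>1(cos \<theta>)\<close>, a Chebyshev polynomial of the second kind.\<close>

definition cheb_U :: "real \<Rightarrow> nat \<Rightarrow> real" where
  "cheb_U \<theta> k = sin (real k * \<theta>) / sin \<theta>"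

lemma cheb_U_0 [simp]: "cheb_U \<theta> 0 = 0"
  by (simp add: cheb_U_def)

lemma cheb_U_1: "sin \<theta> \<noteq> 0 \<Longrightarrow> cheb_U \<theta> 1 = 1"
  by (simp add: cheb_U_def)

lemma cheb_U_2: "sin \<theta> \<noteq> 0 \<Longrightarrow> cheb_U \<theta> 2 = 2 * cos \<theta>"
  by (simp add: cheb_U_def sin_double)

lemma cheb_U_Suc_Suc:
  "cheb_U \<theta> (Suc (Suc k)) = 2 * cos \<theta> * cheb_U \<theta> (Suc k) - cheb_U \<theta> k"
proof -
  have "sin (x + \<theta>) = 2 * cos \<theta> * sin x - sin (x - \<theta>)" for x
    by (simp add: sin_add sin_diff)
  moreover have "real (Suc (Suc k)) * \<theta> = real (Suc k) * \<theta> + \<theta>"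
    "real k * \<theta> = real (Suc k) * \<theta> - \<theta>"
    by (simp_all add: algebra_simps)
  ultimately show ?thesis
    unfolding cheb_U_def by (metis diff_divide_distrib times_divide_eq_right)
qed

lemma abs_cheb_U_le: "\<bar>cheb_U \<theta> k\<bar> \<le> 1 / \<bar>sin \<theta>\<bar>"
  by (simp add: cheb_U_def divide_right_mono)

lemma exists_int_shift_abs_le:
  fixes x h :: real
  assumes "h \<noteq> 0"
  obtains n :: int where "\<bar>x + of_int n * h\<bar> \<le> \<bar>h\<bar> / 2"
proof
  let ?n = "round (- x / h)"
  have "x + of_int ?n * h = h * (of_int ?n - (- x / h))"
    using assms by (simp add: algebra_simps)
  then have "\<bar>x + of_int ?n * h\<bar> = \<bar>h\<bar> * \<bar>of_int ?n - (- x / h)\<bar>"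
    by (simp add: abs_mult)
  also have "\<dots> \<le> \<bar>h\<bar> * (1/2)"
    by (intro mult_left_mono of_int_round_abs_le) simp
  finally show "\<bar>x + of_int ?n * h\<bar> \<le> \<bar>h\<bar> / 2"
    by simp
qed

lemma exists_int_shift_nonpos:
  fixes x h :: real
  assumes "0 < h"
  obtains n :: int where "- h < x + of_int n * h" "x + of_int n * h \<le> 0"
proof
  let ?n = "\<lfloor>- x / h\<rfloor>"
  let ?t = "of_int ?n - (- x / h)"
  have eq: "x + of_int ?n * h = h * ?t"
    using assms by (simp add: algebra_simps)
  have "-1 < ?t" "?t \<le> 0"
    by linarith+
  then have "h * (-1) < h * ?t" "h * ?t \<le> h * 0"
    using assms by (intro mult_strict_left_mono mult_left_mono; simp)+
  then show "- h < x + of_int ?n * h" "x + of_int ?n * h \<le> 0"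
    unfolding eq by simp_all
qed

lemma unimodular_opposite_products:
  fixes a b c d :: real
  assumes "a * d - c * b = 1" and "(a * c) * (b * d) \<le> 0"
  shows "\<bar>a * c\<bar> \<le> 1/2 \<or> \<bar>b * d\<bar> \<le> 1/2"
proof (rule ccontr)
  assume "\<not> ?thesis"
  then have "1/2 * (1/2) < \<bar>a * c\<bar> * \<bar>b * d\<bar>"
    by (intro mult_strict_mono) auto
  also have "\<dots> = - ((a * d) * (c * b))"
    using assms(2) by (simp add: abs_mult[symmetric] algebra_simps)
  also have "\<dots> \<le> 1/4" \<comment> \<open>AM-GM, since \<open>a d + (- c b) = 1\<close>\<close>
    using assms(1) sum_squares_ge_zero[of "a * d + c * b" 0]
    by (simp add: power2_eq_square algebra_simps)
  finally show False by simp
qed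

lemma sign_change_step:
  fixes f :: "nat \<Rightarrow> real"
  assumes "f i \<le> 0" and "0 \<le> f j" and "i < j"
  obtains k where "i \<le> k" "k < j" "f k * f (Suc k) \<le> 0"
  using assms
proof (induction j arbitrary: thesis)
  case 0
  then show ?case by simp
next
  case (Suc j)
  show ?case
  proof (cases "i < j \<and> 0 \<le> f j")
    case True
    then show ?thesis
      using Suc.IH[of thesis] Suc.prems(1,2) by auto
  next
    case False
    then have "f j \<le> 0"
      using Suc.prems(2,4) by (cases "i = j") auto
    then show ?thesis
      using Suc.prems by (intro Suc.prems(1)[of j]) (auto intro: mult_nonpos_nonneg)
  qed
qed

text \<open>\<open>\<kappa>\<close> solves \<open>1/(2A) - \<kappa>/(r A) = -\<kappa>/A\<close>: the factor \<open>1 + 1/(2A) \<le> exp (1/(2A))\<close> by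
  which \<open>C\<close> may grow is paid for by the decrease of \<open>A\<close>.\<close>

lemma potential_step:
  fixes r A A' C C' :: real
  defines "\<kappa> \<equiv> r / (2 * (1 - r))"
  assumes "0 < r" "r < 1" "0 < A" "0 < A'" "A' \<le> r * A"
    and "0 \<le> C" "C' \<le> C * (1 + 1 / (2 * A))"
  shows "C' * exp (- \<kappa> / A') \<le> C * exp (- \<kappa> / A)"
proof -
  have \<kappa>: "0 \<le> \<kappa>" "1 / (2 * A) - \<kappa> / (r * A) = - \<kappa> / A"
    using assms(2-4) by (simp_all add: \<kappa>_def field_simps)
  have "C * (1 + 1 / (2 * A)) \<le> C * exp (1 / (2 * A))"
    using assms(7) by (simp add: mult_left_mono add.commute)
  then have "C' \<le> C * exp (1 / (2 * A))"
    using assms(8) by linarith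
  moreover have "\<kappa> / (r * A) \<le> \<kappa> / A'"
    using assms \<kappa>(1) by (intro divide_left_mono) auto
  then have "exp (- \<kappa> / A') \<le> exp (- \<kappa> / (r * A))"
    by simp
  ultimately have "C' * exp (- \<kappa> / A') \<le> C * exp (1 / (2 * A)) * exp (- \<kappa> / (r * A))"
    using assms(7) by (intro mult_mono) auto
  also have "\<dots> = C * exp (- \<kappa> / A)"
    by (simp add: \<kappa>(2) mult.assoc flip: exp_add)
  finally show ?thesis .
qed

lemma infinite_if_arbitrarily_small:
  fixes f :: "'a \<Rightarrow> real"
  assumes "\<And>x. x \<in> S \<Longrightarrow> 0 < f x" and "\<And>\<epsilon>. 0 < \<epsilon> \<Longrightarrow> \<exists>x\<in>S. f x \<le> \<epsilon>"
  shows "infinite S"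
proof
  assume "finite S"
  have "S \<noteq> {}"
    using assms(2)[of 1] by auto
  then have pos: "0 < Min (f ` S)"
    using \<open>finite S\<close> assms(1) by simp
  then obtain x where "x \<in> S" "f x \<le> Min (f ` S) / 2"
    using assms(2) by (meson half_gt_zero)
  moreover have "Min (f ` S) \<le> f x"
    using \<open>finite S\<close> \<open>x \<in> S\<close> by simp
  ultimately show False
    using pos by simp
qed

lemma approximation_of_small_product:
  fixes x y \<alpha> :: real
  assumes "0 < x" and "\<bar>x * (y - \<alpha> * x)\<bar> \<le> 1/2"
  shows "\<bar>\<alpha> - y / x\<bar> \<le> 1 / (2 * x^2)"
proof -
  have "\<alpha> - y / x = - (x * (y - \<alpha> * x)) / x^2"
    using assms(1) by (simp add: field_simps power2_eq_square)
  then have "\<bar>\<alpha> - y / x\<bar> = \<bar>x * (y - \<alpha> * x)\<bar> / x^2"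
    by simp
  also have "\<dots> \<le> (1/2) / x^2"
    using assms(2) by (rule divide_right_mono) simp
  finally show ?thesis by simp
qed


lemma descent_product_bound:
  fixes A X \<beta> l :: real
  assumes "4 * A * X = \<beta>^2 - 1" and "\<bar>\<beta>\<bar> \<le> l * \<bar>A\<bar>" and "1/2 < \<bar>A\<bar>"
  shows "\<bar>X\<bar> \<le> max (1/2) (l^2 / 4 * \<bar>A\<bar>)"
proof (cases "\<beta>^2 \<le> 1")
  case True
  then have "\<bar>4 * A * X\<bar> \<le> 1"
    unfolding abs_le_iff using assms(1) zero_le_power2[of \<beta>] by linarith
  then have "\<bar>X\<bar> * (4 * \<bar>A\<bar>) \<le> 1"
    by (simp add: abs_mult algebra_simps)
  moreover have "\<bar>X\<bar> * 2 \<le> \<bar>X\<bar> * (4 * \<bar>A\<bar>)"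
    using assms(3) by (intro mult_left_mono) auto
  ultimately have "\<bar>X\<bar> \<le> 1/2"
    by linarith
  then show ?thesis
    by simp
next
  case False
  have "\<beta>^2 \<le> (l * \<bar>A\<bar>)^2"
    using assms(2) by (metis abs_ge_zero abs_le_square_iff abs_of_nonneg order_trans)
  then have "\<bar>A\<bar> * (4 * \<bar>X\<bar>) \<le> \<bar>A\<bar> * (l^2 * \<bar>A\<bar>)"
    using assms(1) False by (simp add: abs_mult power2_eq_square algebra_simps)
  then have "4 * \<bar>X\<bar> \<le> l^2 * \<bar>A\<bar>"
    by (rule mult_left_le_imp_le) (use assms(3) in simp)
  then show ?thesis
    by (simp add: le_max_iff_disj)
qed

text \<open>An abstraction of the bases \<open>(A g e\<^sub>1, A g e\<^sub>2)\<close>, \<open>g \<in> G\<^sub>q\<close>, in the coordinates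
  \<open>(x, y - \<alpha> x)\<close>: the moves are right multiplication by \<open>S\<close> and \<open>T\<^sub>q\<^sup>\<plusminus>\<^sup>1\<close>, and the last
  assumption says that \<open>\<alpha>\<close> is not a slope.\<close>

locale hecke_basis_set =
  fixes q :: nat and B :: "((real \<times> real) \<times> (real \<times> real)) set"
  assumes q_ge_3: "3 \<le> q"
    and B_nonempty: "B \<noteq> {}"
    and det_B: "((a, c), (b, d)) \<in> B \<Longrightarrow> a * d - c * b = 1"
    and rotate_B: "((a, c), (b, d)) \<in> B \<Longrightarrow> ((b, d), (- a, - c)) \<in> B"
    and shift_B: "((a, c), (b, d)) \<in> B \<Longrightarrow>
      ((a, c), (b + lambda_hecke q * a, d + lambda_hecke q * c)) \<in> B"
    and unshift_B: "((a, c), (b, d)) \<in> B \<Longrightarrow>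
      ((a, c), (b - lambda_hecke q * a, d - lambda_hecke q * c)) \<in> B"
    and error_nonzero: "((a, c), (b, d)) \<in> B \<Longrightarrow> c \<noteq> 0"
begin

abbreviation lam :: real where "lam \<equiv> lambda_hecke q"
abbreviation s :: real where "s \<equiv> sin (pi / real q)"
abbreviation U :: "nat \<Rightarrow> real" where "U \<equiv> cheb_U (pi / real q)"

lemma lam_ge_1: "1 \<le> lam" and lam_less_2: "lam < 2"
  using lambda_hecke_bounds[OF q_ge_3] by auto

lemma s_pos: "0 < s"
proof (rule sin_gt_zero)
  show "0 < pi / real q"
    using q_ge_3 by simp
  show "pi / real q < pi"
    using q_ge_3 by (simp add: divide_less_eq)
qed

lemma U_1: "U 1 = 1" and U_2: "U 2 = lam"
  using cheb_U_1 cheb_U_2 s_pos by (auto simp only: lambda_hecke_def)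

lemma U_Suc_Suc: "U (Suc (Suc k)) = lam * U (Suc k) - U k"
  by (simp add: cheb_U_Suc_Suc lambda_hecke_def)

lemma U_q: "U q = 0" and U_q_minus_1: "U (q - 1) = 1"
proof -
  have "real (q - 1) * (pi / real q) = pi - pi / real q"
    using q_ge_3 by (simp add: field_simps)
  then show "U q = 0" "U (q - 1) = 1"
    using q_ge_3 s_pos by (simp_all add: cheb_U_def)
qed

lemma U_pos: "0 < k \<Longrightarrow> k < q \<Longrightarrow> 0 < U k"
  using s_pos by (simp add: cheb_U_def field_simps sin_gt_zero)

lemma abs_U_le: "\<bar>U k\<bar> \<le> 1 / s"
  using abs_cheb_U_le[of "pi / real q" k] s_pos by simp

lemma shift_int_B:
  assumes "((a, c), (b, d)) \<in> B"
  shows "((a, c), (b + of_int n * lam * a, d + of_int n * lam * c)) \<in> B"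
proof (induction n rule: int_induct[where k = 0])
  case base
  show ?case using assms by simp
next
  case (step1 i)
  then show ?case
    using shift_B[OF step1(2)] by (simp add: algebra_simps)
next
  case (step2 i)
  then show ?case
    using unshift_B[OF step2(2)] by (simp add: algebra_simps)
qed

definition basis_vector :: "real \<times> real \<Rightarrow> bool" where
  "basis_vector y \<longleftrightarrow> (\<exists>r. (y, r) \<in> B)"

lemma basis_vector_fst: "(p, r) \<in> B \<Longrightarrow> basis_vector p"
  unfolding basis_vector_def by blast

lemma basis_vector_uminus: "basis_vector (a, c) \<Longrightarrow> basis_vector (- a, - c)"
  using rotate_B[OF rotate_B] by (fastforce simp: basis_vector_def)

definition good_vector :: "real \<times> real \<Rightarrow> bool" where
  "good_vector y \<longleftrightarrow> basis_vector y \<and> 0 < fst y \<and> \<bar>fst y * snd y\<bar> \<le> 1/2"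

lemma good_vector_of_basis_vector:
  assumes "basis_vector (a, c)" "a \<noteq> 0" "\<bar>a * c\<bar> \<le> 1/2"
  obtains y where "good_vector y" "\<bar>snd y\<bar> = \<bar>c\<bar>"
proof (cases "0 < a")
  case True
  then show ?thesis
    using assms by (intro that[of "(a, c)"]) (auto simp: good_vector_def)
next
  case False
  then show ?thesis
    using assms basis_vector_uminus by (intro that[of "(- a, - c)"]) (auto simp: good_vector_def)
qed

text \<open>\<open>S\<close> followed by \<open>T\<^sub>q\<close> sends the basis \<open>(p, r)\<close> to \<open>(r, \<lambda> r - p)\<close>. As \<open>S T\<^sub>q\<close> has trace
  \<open>\<lambda> = 2 cos (\<pi>/q)\<close>, it is elliptic of order \<open>q\<close>, and its powers are given by Chebyshev
  polynomials.\<close>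

definition rotation_orbit :: "real \<times> real \<Rightarrow> real \<times> real \<Rightarrow> nat \<Rightarrow> real \<times> real" where
  "rotation_orbit p r k = (U (Suc k) * fst p + U k * fst r, U (Suc k) * snd p + U k * snd r)"

lemma rotation_orbit_B:
  assumes "((a, c), (b, d)) \<in> B"
  shows "(rotation_orbit (a, c) (b, d) k, rotation_orbit (a, c) (b, d) (Suc k)) \<in> B"
proof (induction k)
  case 0
  show ?case
    using shift_B[OF assms]
    by (simp add: rotation_orbit_def U_1[unfolded One_nat_def] U_2[unfolded numeral_2_eq_2] add.commute)
next
  case (Suc k)
  obtain x z x' z'
    where V: "rotation_orbit (a, c) (b, d) k = (x, z)" "rotation_orbit (a, c) (b, d) (Suc k) = (x', z')"
    by fastforce
  have "((x', z'), (- x + lam * x', - z + lam * z')) \<in> B"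
    using shift_B[OF rotate_B] Suc.IH V by simp
  moreover have "rotation_orbit (a, c) (b, d) (Suc (Suc k)) =
    (- fst (rotation_orbit (a, c) (b, d) k) + lam * fst (rotation_orbit (a, c) (b, d) (Suc k)),
     - snd (rotation_orbit (a, c) (b, d) k) + lam * snd (rotation_orbit (a, c) (b, d) (Suc k)))"
    by (simp add: rotation_orbit_def U_Suc_Suc algebra_simps)
  ultimately show ?case
    using V by simp
qed

lemma rotation_orbit_vertical:
  "rotation_orbit (0, e) (b, t * e) k = (U k * b, e * (U (Suc k) + U k * t))"
  by (simp add: rotation_orbit_def algebra_simps)

text \<open>For a basis with first vector \<open>(0, e)\<close>, normalized so that \<open>-\<lambda> < t \<le> 0\<close>, the product
  \<open>x z\<close> along the rotation orbit is \<open>\<le> 0\<close> at step \<open>1\<close> and \<open>\<ge> 0\<close> at step \<open>q - 1\<close>.\<close>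

lemma rotation_orbit_crossing:
  assumes "((0, e), (b, t * e)) \<in> B" "- lam < t" "t \<le> 0"
  obtains j where "0 < j" "j < q" "\<bar>U j * b * (e * (U (Suc j) + U j * t))\<bar> \<le> 1/2"
proof -
  define V where "V = rotation_orbit (0, e) (b, t * e)"
  define f where "f k = fst (V k) * snd (V k)" for k
  have "e * b = - 1"
    using det_B[OF assms(1)] by simp
  moreover have "f k = (e * b) * (U k * (U (Suc k) + U k * t))" for k
    unfolding f_def V_def rotation_orbit_vertical by (simp add: algebra_simps)
  ultimately have f: "f k = - (U k * (U (Suc k) + U k * t))" for k
    by simp
  have f1: "f 1 \<le> 0"
    using assms(2) U_1 U_2 by (simp add: f numeral_2_eq_2)
  have "Suc (q - 1) = q"
    using q_ge_3 by simp
  have fq: "0 \<le> f (q - 1)"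
    unfolding f \<open>Suc (q - 1) = q\<close> U_q U_q_minus_1 using assms(3) by simp
  have "1 < q - 1"
    using q_ge_3 by simp
  then obtain k where k: "1 \<le> k" "k < q - 1" "f k * f (Suc k) \<le> 0"
    by (rule sign_change_step[OF f1 fq])
  obtain x z x' z' where xz: "V k = (x, z)" "V (Suc k) = (x', z')"
    by fastforce
  have "((x, z), (x', z')) \<in> B"
    using rotation_orbit_B[OF assms(1), of k] xz by (simp add: V_def)
  then have "\<bar>f k\<bar> \<le> 1/2 \<or> \<bar>f (Suc k)\<bar> \<le> 1/2"
    using unimodular_opposite_products det_B k(3) xz by (simp add: f_def)
  then obtain j where "j \<in> {k, Suc k}" "\<bar>f j\<bar> \<le> 1/2"
    by blast
  then show ?thesis
    using k by (intro that[of j]) (auto simp: f_def V_def rotation_orbit_vertical)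
qed

lemma abs_rotation_coeff_le:
  assumes "\<bar>t\<bar> \<le> 2"
  shows "\<bar>U (Suc k) + U k * t\<bar> \<le> 3 / s"
proof -
  have "\<bar>U (Suc k) + U k * t\<bar> \<le> \<bar>U (Suc k)\<bar> + \<bar>U k\<bar> * \<bar>t\<bar>"
    by (metis abs_mult abs_triangle_ineq)
  also have "\<dots> \<le> 1 / s + 1 / s * 2"
    using abs_U_le[of "Suc k"] abs_U_le[of k] assms s_pos by (intro add_mono mult_mono) auto
  finally show ?thesis
    by simp
qed

lemma good_vector_from_vertical:
  assumes "((0, e), (b, d)) \<in> B"
  obtains y where "good_vector y" "\<bar>snd y\<bar> \<le> 3 / s * \<bar>e\<bar>"
proof -
  have "e * b = - 1"
    using det_B[OF assms] by simp
  then have e: "e \<noteq> 0" and b: "b \<noteq> 0"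
    by auto
  have "0 < lam"
    using lam_ge_1 by simp
  then obtain n :: int where n: "- lam < d / e + of_int n * lam" "d / e + of_int n * lam \<le> 0"
    by (rule exists_int_shift_nonpos)
  define t where "t = d / e + of_int n * lam"
  have "t * e = d + of_int n * lam * e"
    using e by (simp add: t_def field_simps)
  then have Bt: "((0, e), (b, t * e)) \<in> B"
    using shift_int_B[OF assms, of n] by simp
  have t: "- lam < t" "t \<le> 0"
    using n by (simp_all add: t_def)
  obtain j where j: "0 < j" "j < q" "\<bar>U j * b * (e * (U (Suc j) + U j * t))\<bar> \<le> 1/2"
    using Bt t by (rule rotation_orbit_crossing)
  have "basis_vector (U j * b, e * (U (Suc j) + U j * t))"
    using basis_vector_fst[OF rotation_orbit_B[OF Bt, of j]] by (simp add: rotation_orbit_vertical)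
  moreover have "U j * b \<noteq> 0"
    using U_pos[OF j(1,2)] b by simp
  ultimately obtain y where y: "good_vector y" "\<bar>snd y\<bar> = \<bar>e\<bar> * \<bar>U (Suc j) + U j * t\<bar>"
    using j(3) by (rule good_vector_of_basis_vector) (simp add: abs_mult)
  have "\<bar>U (Suc j) + U j * t\<bar> \<le> 3 / s"
    using t lam_less_2 by (intro abs_rotation_coeff_le) simp
  then have "\<bar>U (Suc j) + U j * t\<bar> * \<bar>e\<bar> \<le> 3 / s * \<bar>e\<bar>"
    by (rule mult_right_mono) simp
  with y(2) have "\<bar>snd y\<bar> \<le> 3 / s * \<bar>e\<bar>"
    by (metis mult.commute)
  with y(1) show ?thesis
    by (rule that)
qed

lemma good_vector_from_small_product:
  assumes "((a, c), (b, d)) \<in> B" "\<bar>a * c\<bar> \<le> 1/2"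
  obtains y where "good_vector y" "\<bar>snd y\<bar> \<le> 3 / s * \<bar>c\<bar>"
proof (cases "a = 0")
  case True
  then show ?thesis
    using assms(1) good_vector_from_vertical that by blast
next
  case False
  obtain y where y: "good_vector y" "\<bar>snd y\<bar> = \<bar>c\<bar>"
    using basis_vector_fst[OF assms(1)] False assms(2) by (rule good_vector_of_basis_vector)
  have "s \<le> 3"
    using sin_le_one[of "pi / real q"] by linarith
  then have "1 \<le> 3 / s"
    using s_pos by simp
  then have "\<bar>c\<bar> \<le> 3 / s * \<bar>c\<bar>"
    using mult_right_mono[of 1 "3 / s" "\<bar>c\<bar>"] by simp
  then show ?thesis
    using y that by simp
qed

definition rho :: real where
  "rho = lam^2 / 4"

lemma rho_pos: "0 < rho" and rho_less_1: "rho < 1"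
proof -
  have "1 \<le> lam^2"
    using lam_ge_1 by (simp add: one_le_power)
  moreover have "lam^2 < 2^2"
    using lam_ge_1 lam_less_2 by (intro power_strict_mono) auto
  ultimately show "0 < rho" "rho < 1"
    using lam_ge_1 by (simp_all add: rho_def)
qed

lemma descent_step:
  assumes "((a, c), (b, d)) \<in> B" and "1/2 < \<bar>a * c\<bar>"
  obtains a' c' where "((a', c'), (- a, - c)) \<in> B"
    and "\<bar>a' * c'\<bar> \<le> max (1/2) (rho * \<bar>a * c\<bar>)"
    and "\<bar>c'\<bar> \<le> \<bar>c\<bar> * (1 + 1 / (2 * \<bar>a * c\<bar>))" and "\<bar>c'\<bar> \<le> 2 * \<bar>c\<bar>"
proof -
  have "a * c \<noteq> 0"
    using assms(2) by auto
  then have "2 * lam * (a * c) \<noteq> 0"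
    using lam_ge_1 by auto
  then obtain n :: int
    where n: "\<bar>a * d + c * b + of_int n * (2 * lam * (a * c))\<bar> \<le> \<bar>2 * lam * (a * c)\<bar> / 2"
    by (rule exists_int_shift_abs_le)
  define a' where "a' = b + of_int n * lam * a"
  define c' where "c' = d + of_int n * lam * c"
  define \<beta> where "\<beta> = a * c' + c * a'"
  have unimodular: "a * c' - c * a' = 1"
    using det_B[OF assms(1)] by (simp add: a'_def c'_def algebra_simps)
  have \<beta>: "\<bar>\<beta>\<bar> \<le> lam * \<bar>a * c\<bar>"
    using n lam_ge_1 by (simp add: \<beta>_def a'_def c'_def abs_mult algebra_simps)
  have "4 * (a * c) * (a' * c') = (a * c' + c * a')^2 - (a * c' - c * a')^2"
    by (simp add: power2_eq_square algebra_simps)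
  then have "4 * (a * c) * (a' * c') = \<beta>^2 - 1"
    using unimodular by (simp add: \<beta>_def)
  then have product: "\<bar>a' * c'\<bar> \<le> max (1/2) (rho * \<bar>a * c\<bar>)"
    using \<beta> assms(2) unfolding rho_def by (rule descent_product_bound)
  have "1 + \<beta> = 2 * a * c'"
    using unimodular by (simp add: \<beta>_def)
  then have "\<bar>c'\<bar> * (2 * \<bar>a * c\<bar>) = \<bar>c\<bar> * \<bar>1 + \<beta>\<bar>"
    by (simp add: abs_mult)
  also have "\<dots> \<le> \<bar>c\<bar> * (1 + 2 * \<bar>a * c\<bar>)"
    using \<beta> lam_less_2 mult_right_mono[of lam 2 "\<bar>a * c\<bar>"] by (intro mult_left_mono) auto
  finally have "\<bar>c'\<bar> \<le> \<bar>c\<bar> * (1 + 2 * \<bar>a * c\<bar>) / (2 * \<bar>a * c\<bar>)"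
    using assms(2) by (subst pos_le_divide_eq) auto
  also have "\<dots> = \<bar>c\<bar> * (1 + 1 / (2 * \<bar>a * c\<bar>))"
    using \<open>a * c \<noteq> 0\<close> by (simp add: field_simps)
  finally have error: "\<bar>c'\<bar> \<le> \<bar>c\<bar> * (1 + 1 / (2 * \<bar>a * c\<bar>))" .
  have "1 / (2 * \<bar>a * c\<bar>) \<le> 1"
    using assms(2) by (subst divide_le_eq_1_pos) auto
  then have "\<bar>c\<bar> * (1 + 1 / (2 * \<bar>a * c\<bar>)) \<le> \<bar>c\<bar> * 2"
    by (intro mult_left_mono) auto
  with error have doubled: "\<bar>c'\<bar> \<le> 2 * \<bar>c\<bar>"
    by linarith
  have "((a', c'), (- a, - c)) \<in> B"
    using rotate_B[OF shift_int_B[OF assms(1)]] by (simp add: a'_def c'_def)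
  then show ?thesis
    using product error doubled by (rule that)
qed

definition kappa :: real where
  "kappa = rho / (2 * (1 - rho))"

definition K :: real where
  "K = 6 * exp (2 * kappa) / s"

lemma K_exp_ge:
  assumes "1/2 < A"
  shows "6 / s \<le> K * exp (- kappa / A)"
proof -
  have "0 \<le> kappa"
    using rho_pos rho_less_1 by (simp add: kappa_def)
  then have "kappa * 1 \<le> kappa * (2 * A)"
    using assms by (intro mult_left_mono) auto
  then have "kappa / A \<le> 2 * kappa"
    using assms by (simp add: field_simps)
  then have "1 \<le> exp (2 * kappa - kappa / A)"
    by simp
  then have "6 / s * 1 \<le> 6 / s * exp (2 * kappa - kappa / A)"
    using s_pos by (intro mult_left_mono) auto
  also have "\<dots> = K * exp (- kappa / A)"
    by (simp add: K_def exp_diff exp_minus field_simps)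
  finally show ?thesis
    by simp
qed

lemma K_pos: "0 < K"
  using s_pos by (simp add: K_def)

lemma K_ge_3_div_s: "3 / s \<le> K"
proof -
  have "3 / s \<le> 6 / s"
    using s_pos by (intro divide_right_mono) auto
  also have "\<dots> \<le> K * exp (- kappa / 1)"
    by (rule K_exp_ge) simp
  also have "\<dots> \<le> K"
    using rho_pos rho_less_1 K_pos by (intro mult_left_le) (auto simp: kappa_def)
  finally show ?thesis .
qed

text \<open>A descent step divides \<open>|a c|\<close> by at least \<open>1 / rho\<close> but may enlarge \<open>|c|\<close> by the factor
  \<open>1 + 1 / (2 |a c|)\<close>; the potential \<open>|c| exp (- kappa / |a c|)\<close> does not increase.\<close>

lemma good_vector_from_large_product:
  assumes "((a, c), (b, d)) \<in> B" "1/2 < \<bar>a * c\<bar>" "2 * \<bar>a * c\<bar> \<le> (1 / rho) ^ N"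
  obtains y where "good_vector y" "\<bar>snd y\<bar> \<le> K * \<bar>c\<bar> * exp (- kappa / \<bar>a * c\<bar>)"
  using assms
proof (induction N arbitrary: a c b d thesis)
  case 0
  then show ?case by simp
next
  case (Suc N)
  obtain a' c' where B': "((a', c'), (- a, - c)) \<in> B"
    and ac': "\<bar>a' * c'\<bar> \<le> max (1/2) (rho * \<bar>a * c\<bar>)"
    and c': "\<bar>c'\<bar> \<le> \<bar>c\<bar> * (1 + 1 / (2 * \<bar>a * c\<bar>))" and c'_le: "\<bar>c'\<bar> \<le> 2 * \<bar>c\<bar>"
    by (rule descent_step[OF Suc.prems(2,3)])
  show ?case
  proof (cases "\<bar>a' * c'\<bar> \<le> 1/2")
    case True
    obtain y where y: "good_vector y" "\<bar>snd y\<bar> \<le> 3 / s * \<bar>c'\<bar>"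
      using B' True by (rule good_vector_from_small_product)
    have "3 / s * \<bar>c'\<bar> \<le> 3 / s * (2 * \<bar>c\<bar>)"
      using c'_le s_pos by (intro mult_left_mono) auto
    also have "\<dots> \<le> K * \<bar>c\<bar> * exp (- kappa / \<bar>a * c\<bar>)"
      using mult_right_mono[OF K_exp_ge[OF Suc.prems(3)], of "\<bar>c\<bar>"] by (simp add: ac_simps)
    finally show ?thesis
      using y by (intro Suc.prems(1)) auto
  next
    case False
    then have ac': "\<bar>a' * c'\<bar> \<le> rho * \<bar>a * c\<bar>"
      using ac' by linarith
    then have "2 * \<bar>a' * c'\<bar> \<le> rho * (2 * \<bar>a * c\<bar>)"
      by simp
    also have "\<dots> \<le> rho * (1 / rho) ^ Suc N"
      using Suc.prems(4) rho_pos by (intro mult_left_mono) auto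
    finally have bound: "2 * \<bar>a' * c'\<bar> \<le> (1 / rho) ^ N"
      using rho_pos by simp
    obtain y where y: "good_vector y" "\<bar>snd y\<bar> \<le> K * \<bar>c'\<bar> * exp (- kappa / \<bar>a' * c'\<bar>)"
      by (rule Suc.IH[OF _ B' _ bound]) (use False in auto)
    have "\<bar>c'\<bar> * exp (- kappa / \<bar>a' * c'\<bar>) \<le> \<bar>c\<bar> * exp (- kappa / \<bar>a * c\<bar>)"
      unfolding kappa_def using rho_pos rho_less_1 Suc.prems(3) False ac' c'
      by (intro potential_step) auto
    then have "K * \<bar>c'\<bar> * exp (- kappa / \<bar>a' * c'\<bar>) \<le> K * \<bar>c\<bar> * exp (- kappa / \<bar>a * c\<bar>)"
      using K_pos by (simp add: mult.assoc)
    with y show ?thesis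
      by (intro Suc.prems(1)) auto
  qed
qed

lemma good_vector_near_basis:
  assumes "((a, c), (b, d)) \<in> B"
  obtains y where "good_vector y" "\<bar>snd y\<bar> \<le> K * \<bar>c\<bar>"
proof (cases "\<bar>a * c\<bar> \<le> 1/2")
  case True
  then obtain y where y: "good_vector y" "\<bar>snd y\<bar> \<le> 3 / s * \<bar>c\<bar>"
    using assms good_vector_from_small_product by blast
  have "3 / s * \<bar>c\<bar> \<le> K * \<bar>c\<bar>"
    using K_ge_3_div_s by (rule mult_right_mono) simp
  then show ?thesis
    using y that by simp
next
  case False
  have "1 < 1 / rho"
    using rho_pos rho_less_1 by simp
  then obtain N where N: "2 * \<bar>a * c\<bar> < (1 / rho) ^ N"
    using real_arch_pow by blast
  have "1/2 < \<bar>a * c\<bar>"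
    using False by simp
  then obtain y where y: "good_vector y" "\<bar>snd y\<bar> \<le> K * \<bar>c\<bar> * exp (- kappa / \<bar>a * c\<bar>)"
    by (rule good_vector_from_large_product[OF assms _ less_imp_le[OF N]])
  have "0 \<le> kappa"
    using rho_pos rho_less_1 by (simp add: kappa_def)
  then have "K * \<bar>c\<bar> * exp (- kappa / \<bar>a * c\<bar>) \<le> K * \<bar>c\<bar> * 1"
    using K_pos by (intro mult_left_mono) auto
  then show ?thesis
    using y that by simp
qed

lemma shrink_error:
  assumes "((a, c), (b, d)) \<in> B"
  obtains a' c' b' d' where "((a', c'), (b', d')) \<in> B" "\<bar>c'\<bar> \<le> lam / 2 * \<bar>c\<bar>"
proof -
  have "lam * c \<noteq> 0"
    using error_nonzero[OF assms] lam_ge_1 by auto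
  then obtain n :: int where n: "\<bar>d + of_int n * (lam * c)\<bar> \<le> \<bar>lam * c\<bar> / 2"
    by (rule exists_int_shift_abs_le)
  have "((b + of_int n * lam * a, d + of_int n * lam * c), (- a, - c)) \<in> B"
    using rotate_B[OF shift_int_B[OF assms]] .
  moreover have "\<bar>d + of_int n * lam * c\<bar> \<le> lam / 2 * \<bar>c\<bar>"
    using n lam_ge_1 by (simp add: abs_mult mult.assoc)
  ultimately show ?thesis
    by (rule that)
qed

lemma exists_basis_small_error:
  assumes "0 < \<epsilon>"
  obtains a c b d where "((a, c), (b, d)) \<in> B" "\<bar>c\<bar> \<le> \<epsilon>"
proof -
  obtain a0 c0 b0 d0 where B0: "((a0, c0), (b0, d0)) \<in> B"
    using B_nonempty by auto
  have shrink: "\<exists>a c b d. ((a, c), (b, d)) \<in> B \<and> \<bar>c\<bar> \<le> (lam / 2) ^ k * \<bar>c0\<bar>" for k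
  proof (induction k)
    case 0
    then show ?case using B0 by auto
  next
    case (Suc k)
    then obtain a c b d where B1: "((a, c), (b, d)) \<in> B" and c: "\<bar>c\<bar> \<le> (lam / 2) ^ k * \<bar>c0\<bar>"
      by blast
    obtain a' c' b' d' where "((a', c'), (b', d')) \<in> B" "\<bar>c'\<bar> \<le> lam / 2 * \<bar>c\<bar>"
      using B1 by (rule shrink_error)
    moreover have "lam / 2 * \<bar>c\<bar> \<le> (lam / 2) ^ Suc k * \<bar>c0\<bar>"
      using mult_left_mono[OF c, of "lam / 2"] lam_ge_1 by (simp add: mult.assoc)
    ultimately show ?case
      by (blast intro: order_trans)
  qed
  have "0 < \<epsilon> / \<bar>c0\<bar>" "lam / 2 < 1"
    using assms error_nonzero[OF B0] lam_less_2 by simp_all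
  then obtain k where "(lam / 2) ^ k < \<epsilon> / \<bar>c0\<bar>"
    using real_arch_pow_inv by blast
  then have "(lam / 2) ^ k * \<bar>c0\<bar> < \<epsilon>"
    using error_nonzero[OF B0] by (simp add: pos_less_divide_eq)
  with shrink[of k] show ?thesis
    using that by (meson less_imp_le order_trans)
qed

lemma good_vectors_arbitrarily_small:
  assumes "0 < \<epsilon>"
  obtains y where "good_vector y" "\<bar>snd y\<bar> \<le> \<epsilon>"
proof -
  have "0 < \<epsilon> / K"
    using assms K_pos by simp
  then obtain a c b d where B1: "((a, c), (b, d)) \<in> B" and c: "\<bar>c\<bar> \<le> \<epsilon> / K"
    by (rule exists_basis_small_error)
  obtain y where y: "good_vector y" "\<bar>snd y\<bar> \<le> K * \<bar>c\<bar>"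
    using B1 by (rule good_vector_near_basis)
  have "K * \<bar>c\<bar> \<le> \<epsilon>"
    using c K_pos by (simp add: pos_le_divide_eq mult.commute)
  then show ?thesis
    using y that by simp
qed

end

definition sheared_columns :: "real \<Rightarrow> real^2^2 \<Rightarrow> (real \<times> real) \<times> (real \<times> real)" where
  "sheared_columns \<alpha> M = ((M$1$1, M$2$1 - \<alpha> * M$1$1), (M$1$2, M$2$2 - \<alpha> * M$1$2))"

definition sheared_hecke_bases :: "real \<Rightarrow> real^2^2 \<Rightarrow> nat \<Rightarrow> ((real \<times> real) \<times> (real \<times> real)) set"
  where "sheared_hecke_bases \<alpha> A m = {sheared_columns \<alpha> (A ** g) | g. g \<in> hecke_group m}"

lemma sheared_hecke_bases_move:
  assumes "((a, c), (b, d)) \<in> sheared_hecke_bases \<alpha> A m"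
    and "\<And>g. g \<in> hecke_group m \<Longrightarrow> g ** mat2 p r u w \<in> hecke_group m"
  shows "((p * a + u * b, p * c + u * d), (r * a + w * b, r * c + w * d)) \<in> sheared_hecke_bases \<alpha> A m"
proof -
  obtain g where g: "g \<in> hecke_group m" "sheared_columns \<alpha> (A ** g) = ((a, c), (b, d))"
    using assms(1) by (auto simp: sheared_hecke_bases_def)
  have "sheared_columns \<alpha> (A ** (g ** mat2 p r u w)) =
    ((p * a + u * b, p * c + u * d), (r * a + w * b, r * c + w * d))"
    using g(2) by (auto simp: sheared_columns_def matrix_mul_assoc matrix_matrix_mult_2_nth algebra_simps)
  then show ?thesis
    unfolding sheared_hecke_bases_def using assms(2)[OF g(1)]
    by (intro CollectI exI[of _ "g ** mat2 p r u w"]) simp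
qed

lemma sheared_hecke_bases_det:
  assumes "((a, c), (b, d)) \<in> sheared_hecke_bases \<alpha> A m" and "det A = 1"
  shows "a * d - c * b = 1"
proof -
  obtain g where g: "g \<in> hecke_group m" "sheared_columns \<alpha> (A ** g) = ((a, c), (b, d))"
    using assms(1) by (auto simp: sheared_hecke_bases_def)
  then have "a * d - c * b = det (A ** g)"
    by (auto simp: sheared_columns_def det_2 algebra_simps)
  then show ?thesis
    using assms(2) hecke_group_det[OF g(1)] by (simp add: det_mul)
qed

lemma sheared_hecke_bases_fst:
  assumes "((a, c), r) \<in> sheared_hecke_bases \<alpha> A m"
  obtains v where "v \<in> transl_set A (Lambda_hecke m)" "v $ 1 = a" "v $ 2 - \<alpha> * v $ 1 = c"
proof -
  obtain g where g: "g \<in> hecke_group m" "sheared_columns \<alpha> (A ** g) = ((a, c), r)"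
    using assms by (auto simp: sheared_hecke_bases_def)
  show ?thesis
  proof
    show "A *v (g *v vec2 1 0) \<in> transl_set A (Lambda_hecke m)"
      using g(1) by (auto simp: transl_set_def Lambda_hecke_def)
    show "(A *v (g *v vec2 1 0)) $ 1 = a" "(A *v (g *v vec2 1 0)) $ 2 - \<alpha> * (A *v (g *v vec2 1 0)) $ 1 = c"
      using g(2) by (auto simp: sheared_columns_def matrix_vector_mul_assoc matrix_vector_mult_2_nth)
  qed
qed

lemma hecke_basis_set_sheared_hecke_bases:
  assumes "3 \<le> m" and "det A = 1"
    and not_slope: "\<And>v. v \<in> transl_set A (Lambda_hecke m) \<Longrightarrow> v $ 1 \<noteq> 0 \<Longrightarrow> \<alpha> \<noteq> v $ 2 / v $ 1"
  shows "hecke_basis_set m (sheared_hecke_bases \<alpha> A m)"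
proof unfold_locales
  show "3 \<le> m"
    by (rule assms(1))
  show "sheared_hecke_bases \<alpha> A m \<noteq> {}"
    unfolding sheared_hecke_bases_def using hecke_group.id by blast
  fix a c b d
  assume B: "((a, c), (b, d)) \<in> sheared_hecke_bases \<alpha> A m"
  show det: "a * d - c * b = 1"
    using B assms(2) by (rule sheared_hecke_bases_det)
  show "((b, d), (- a, - c)) \<in> sheared_hecke_bases \<alpha> A m"
    using sheared_hecke_bases_move[OF B, of 0 "- 1" 1 0] hecke_group.mulS by (simp add: S_mat_def)
  show "((a, c), (b + lambda_hecke m * a, d + lambda_hecke m * c)) \<in> sheared_hecke_bases \<alpha> A m"
    using sheared_hecke_bases_move[OF B, of 1 "lambda_hecke m" 0 1] hecke_group.mulT
    by (simp add: T_mat_def add.commute)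
  show "((a, c), (b - lambda_hecke m * a, d - lambda_hecke m * c)) \<in> sheared_hecke_bases \<alpha> A m"
    using sheared_hecke_bases_move[OF B, of 1 "- lambda_hecke m" 0 1] hecke_group.mulTinv
    by (simp add: T_mat_def matrix_inv_mat2)
  show "c \<noteq> 0"
  proof
    assume "c = 0"
    obtain v where "v \<in> transl_set A (Lambda_hecke m)" "v $ 1 = a" "v $ 2 - \<alpha> * v $ 1 = c"
      using B by (rule sheared_hecke_bases_fst)
    moreover have "a \<noteq> 0"
      using det \<open>c = 0\<close> by auto
    ultimately show False
      using not_slope[of v] \<open>c = 0\<close> by (simp add: field_simps)
  qed
qed

lemma approximant_of_good_vector:
  assumes "hecke_basis_set m (sheared_hecke_bases \<alpha> A m)"
    and "hecke_basis_set.good_vector (sheared_hecke_bases \<alpha> A m) y"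
  obtains v where "v \<in> transl_set A (Lambda_hecke m)" "0 < v $ 1"
    "\<bar>\<alpha> - v $ 2 / v $ 1\<bar> \<le> 1 / (2 * (v $ 1)^2)" "\<bar>v $ 2 - \<alpha> * v $ 1\<bar> = \<bar>snd y\<bar>"
proof -
  have y: "0 < fst y" "\<bar>fst y * snd y\<bar> \<le> 1/2" "\<exists>r. ((fst y, snd y), r) \<in> sheared_hecke_bases \<alpha> A m"
    using assms(2)
    by (simp_all add: hecke_basis_set.good_vector_def[OF assms(1)] hecke_basis_set.basis_vector_def[OF assms(1)])
  then obtain v where "v \<in> transl_set A (Lambda_hecke m)" "v $ 1 = fst y" "v $ 2 - \<alpha> * v $ 1 = snd y"
    using sheared_hecke_bases_fst by blast
  then show ?thesis
    using y approximation_of_small_product[of "v $ 1" "v $ 2" \<alpha>] by (intro that) auto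
qed

theorem mainTheorem17:
  fixes m :: nat and A :: "real^2^2" and \<alpha> :: real
  assumes "m \<ge> 3" and "A \<in> SL2"
  shows "(\<exists>v \<in> transl_set A (Lambda_hecke m). v $ 1 \<noteq> 0 \<and> \<alpha> = v $ 2 / v $ 1)
       \<or> infinite {v \<in> transl_set A (Lambda_hecke m).
                    v $ 1 > 0 \<and> \<bar>\<alpha> - v $ 2 / v $ 1\<bar> \<le> 1 / (2 * (v $ 1)^2)}"
    (is "?slope \<or> infinite ?S")
proof (cases ?slope)
  case False
  then have bases: "hecke_basis_set m (sheared_hecke_bases \<alpha> A m)"
    using assms by (intro hecke_basis_set_sheared_hecke_bases) (auto simp: SL2_def)
  interpret hecke_basis_set m "sheared_hecke_bases \<alpha> A m"
    by (rule bases)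
  have "infinite ?S"
  proof (rule infinite_if_arbitrarily_small[where f = "\<lambda>v. \<bar>v $ 2 - \<alpha> * v $ 1\<bar>"])
    show "0 < \<bar>v $ 2 - \<alpha> * v $ 1\<bar>" if "v \<in> ?S" for v
      using that False by (auto simp: field_simps)
    show "\<exists>v \<in> ?S. \<bar>v $ 2 - \<alpha> * v $ 1\<bar> \<le> \<epsilon>" if "0 < \<epsilon>" for \<epsilon>
    proof -
      obtain y where y: "good_vector y" "\<bar>snd y\<bar> \<le> \<epsilon>"
        using \<open>0 < \<epsilon>\<close> by (rule good_vectors_arbitrarily_small)
      obtain v where "v \<in> transl_set A (Lambda_hecke m)" "0 < v $ 1"
        "\<bar>\<alpha> - v $ 2 / v $ 1\<bar> \<le> 1 / (2 * (v $ 1)^2)" "\<bar>v $ 2 - \<alpha> * v $ 1\<bar> = \<bar>snd y\<bar>"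
        using bases y(1) by (rule approximant_of_good_vector)
      then show ?thesis
        using y(2) by auto
    qed
  qed
  then show ?thesis ..
qed simp

end
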